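(* Let $A,B\in\mathrm{Sym}^{\rm qnd}(\mathbb C^{2d})$ be such that $\mathbb 1+A\theta B\theta$ is invertible (so $A\#B$ is well defined). Then \begin{align*} A\#B&=c\big(c(A\theta)c(B\theta)\big)\theta\\ &=(\mathbb 1+A\theta)^{-1}(A\theta+B\theta)(\mathbb 1+A\theta B\theta)^{-1}(\mathbb 1+A\theta)\theta\\ &=(\mathbb 1+B\theta)(\mathbb 1+A\theta B\theta)^{-1}(A\theta+B\theta)(\mathbb 1+B\theta)^{-1}\theta\\ &=(\mathbb 1-A\theta)(\mathbb 1+B\theta A\theta)^{-1}(A\theta+B\theta)(\mathbb 1-A\theta)^{-1}\theta\\ &=(\mathbb 1-B\theta)^{-1}(A\theta+B\theta)(\mathbb 1+B\theta A\theta)^{-1}(\mathbb 1-B\theta)\theta, \end{align*} (all inverses and Cayley transforms appearing here exist), $c\big((A\#B)\theta\big)=c(A\theta)c(B\theta)$, \[ \mathbb 1+A\theta B\theta=(\mathbb 1+A\theta)\big(\mathbb 1+(A\#B)\theta\big)^{-1}(\mathbb 1+B\theta), \] and $A\#B\in\mathrm{Sym}^{\rm qnd}(\mathbb C^{2d})$.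
   Context: Let $d\ge 1$, let $\mathbb 1$ denote an identity matrix, and let $\theta=\begin{bmatrix}0&-i\mathbb 1_d\\ i\mathbb 1_d&0\end{bmatrix}$ ($2d\times 2d$). $\mathrm{Sym}(\mathbb C^{n})$ denotes the set of complex symmetric $n\times n$ matrices, and $\mathrm{Sym}^{\rm qnd}(\mathbb C^{2d})=\{A\in\mathrm{Sym}(\mathbb C^{2d}):\det(\mathbb 1+A\theta)\neq0\}$. For a square matrix $R$ with $\mathbb 1+R$ invertible, its Cayley transform is $c(R)=(\mathbb 1-R)(\mathbb 1+R)^{-1}$. For $A,B\in\mathrm{Sym}(\mathbb C^{2d})$ such that $M=\begin{bmatrix}\theta A\theta&-\theta\\ \theta&\theta B\theta\end{bmatrix}$ is invertible, $A\#B:=J^TM^{-1}J$ with $J=\begin{bmatrix}-\mathbb 1_{2d}\\ \mathbb 1_{2d}\end{bmatrix}$; $A\#B$ is well defined iff $M$ is invertible, which holds iff $\mathbb 1+A\theta B\theta$ is invertible. *)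

theory Defs
  imports "HOL-Analysis.Analysis"
begin

text \<open>Indices of \<open>\<complex>^{2d}\<close> are \<open>'d + 'd\<close> (first block \<open>Inl\<close>, second block \<open>Inr\<close>),
  where \<open>'d\<close> is a finite type with \<open>CARD('d) = d\<close>.\<close>

definition theta :: "complex ^ ('d::finite + 'd) ^ ('d + 'd)" where
  "theta = (\<chi> i j. case (i, j) of
      (Inl a, Inr b) \<Rightarrow> (if a = b then - \<i> else 0)
    | (Inr a, Inl b) \<Rightarrow> (if a = b then \<i> else 0)
    | _ \<Rightarrow> 0)"

definition Sym :: "complex ^ 'n ^ 'n \<Rightarrow> bool" where
  "Sym A \<longleftrightarrow> transpose A = A"

definition Sym_qnd :: "complex ^ ('d::finite + 'd) ^ ('d + 'd) \<Rightarrow> bool" where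
  "Sym_qnd A \<longleftrightarrow> Sym A \<and> det (mat 1 + A ** theta) \<noteq> 0"

text \<open>Cayley transform (meaningful when \<open>1 + R\<close> is invertible).\<close>
definition cayley :: "complex ^ 'n ^ 'n \<Rightarrow> complex ^ 'n ^ 'n" where
  "cayley R = (mat 1 - R) ** matrix_inv (mat 1 + R)"

definition Jmat :: "complex ^ ('d::finite + 'd) ^ (('d + 'd) + ('d + 'd))" where
  "Jmat = (\<chi> i j. case i of Inl k \<Rightarrow> - (mat 1 $ k $ j) | Inr k \<Rightarrow> mat 1 $ k $ j)"

definition Mmat :: "complex ^ ('d::finite + 'd) ^ ('d + 'd) \<Rightarrow> complex ^ ('d + 'd) ^ ('d + 'd)
    \<Rightarrow> complex ^ (('d + 'd) + ('d + 'd)) ^ (('d + 'd) + ('d + 'd))" where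
  "Mmat A B = (\<chi> i j. case (i, j) of
      (Inl a, Inl b) \<Rightarrow> (theta ** A ** theta) $ a $ b
    | (Inl a, Inr b) \<Rightarrow> - (theta $ a $ b)
    | (Inr a, Inl b) \<Rightarrow> theta $ a $ b
    | (Inr a, Inr b) \<Rightarrow> (theta ** B ** theta) $ a $ b)"

definition sharp :: "complex ^ ('d::finite + 'd) ^ ('d + 'd) \<Rightarrow> complex ^ ('d + 'd) ^ ('d + 'd)
    \<Rightarrow> complex ^ ('d + 'd) ^ ('d + 'd)" (infixl "#\<^sub>s" 70) where
  "A #\<^sub>s B = transpose Jmat ** matrix_inv (Mmat A B) ** Jmat"

end

theory Submission
  imports Defs
begin

text \<open>Write \<open>a = A\<theta>\<close>, \<open>b = B\<theta>\<close>. Inverting the block matrix \<open>M\<close> explicitly gives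
  \<open>A#B = (1 - (1 - a)(1 + ba)\<^sup>-\<^sup>1(1 - b))\<theta>\<close>. On the Cayley side, \<open>1 + c(x) = 2(1 + x)\<^sup>-\<^sup>1\<close>
  shows \<open>1 + c(a)c(b) = 2(1 + a)\<^sup>-\<^sup>1(1 + ab)(1 + b)\<^sup>-\<^sup>1\<close>, hence
  \<open>1 + c(c(a)c(b)) = (1 + b)(1 + ab)\<^sup>-\<^sup>1(1 + a)\<close>, and the push-through identity
  \<open>(1 + ba)\<^sup>-\<^sup>1 = 1 - b(1 + ab)\<^sup>-\<^sup>1a\<close> shows that this is \<open>2\<close> minus \<open>(1 - a)(1 + ba)\<^sup>-\<^sup>1(1 - b)\<close>, so
  \<open>A#B = c(c(a)c(b))\<theta>\<close>. The remaining formulas are rearrangements based on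
  \<open>(1 + a)(1 + b) = (1 + ab) + (a + b)\<close> and \<open>(1 - b)(1 - a) = (1 + ba) - (a + b)\<close>, together with
  \<open>c(c(x)) = x\<close>. Invertibility of \<open>1 - a\<close> comes from symmetry: \<open>(1 - a)\<^sup>T = \<theta>(1 + a)\<theta>\<close>.\<close>

section \<open>The ring of complex square matrices\<close>

text \<open>A copy of \<open>complex^'n^'n\<close> with matrix multiplication as \<open>*\<close>, so that the generic ring
  automation applies; results are carried back to matrices with the \<open>untransferred\<close> attribute.\<close>

typedef 'n sqmat = "UNIV :: (complex^'n::finite^'n) set" by auto
setup_lifting type_definition_sqmat

instantiation sqmat :: (finite) ring_1
begin
lift_definition zero_sqmat :: "'a sqmat" is "0" .
lift_definition one_sqmat :: "'a sqmat" is "mat 1" .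
lift_definition plus_sqmat :: "'a sqmat \<Rightarrow> 'a sqmat \<Rightarrow> 'a sqmat" is "(+)" .
lift_definition minus_sqmat :: "'a sqmat \<Rightarrow> 'a sqmat \<Rightarrow> 'a sqmat" is "(-)" .
lift_definition uminus_sqmat :: "'a sqmat \<Rightarrow> 'a sqmat" is "uminus" .
lift_definition times_sqmat :: "'a sqmat \<Rightarrow> 'a sqmat \<Rightarrow> 'a sqmat" is "(**)" .
instance
proof
  fix a b c :: "'a sqmat"
  show "a * b * c = a * (b * c)" by transfer (simp add: matrix_mul_assoc)
  show "1 * a = a" by transfer simp
  show "a * 1 = a" by transfer simp
  show "a + b + c = a + (b + c)" by transfer (simp add: add.assoc)
  show "a + b = b + a" by transfer (simp add: add.commute)
  show "0 + a = a" by transfer simp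
  show "- a + a = 0" by transfer simp
  show "a - b = a + - b" by transfer simp
  show "(a + b) * c = a * c + b * c"
    by transfer (simp add: vec_eq_iff matrix_matrix_mult_def distrib_right sum.distrib)
  show "a * (b + c) = a * b + a * c" by transfer (simp add: matrix_add_ldistrib)
  show "(0::'a sqmat) \<noteq> 1" by transfer (simp add: vec_eq_iff mat_def)
qed
end

lift_definition sqmat_unit :: "'n::finite sqmat \<Rightarrow> bool" is invertible .
lift_definition sqmat_inv :: "'n::finite sqmat \<Rightarrow> 'n sqmat" is matrix_inv .
lift_definition sqmat_cayley :: "'n::finite sqmat \<Rightarrow> 'n sqmat" is cayley .

lemma sqmat_cayley_eq: "sqmat_cayley x = (1 - x) * sqmat_inv (1 + x)"
  by transfer (simp add: cayley_def)

lemma matrix_inv_inverse: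
  fixes X :: "'a::semiring_1^'n^'m"
  assumes "invertible X"
  shows "X ** matrix_inv X = mat 1 \<and> matrix_inv X ** X = mat 1"
  using assms unfolding invertible_def matrix_inv_def by (rule someI_ex)

lemma matrix_inv_eqI:
  fixes X Y :: "'a::field^'n::finite^'n"
  assumes XY: "X ** Y = mat 1"
  shows "matrix_inv X = Y"
proof -
  have "invertible X"
    using XY by (auto simp: invertible_right_inverse)
  have "matrix_inv X = matrix_inv X ** (X ** Y)"
    by (simp add: XY)
  also have "\<dots> = (matrix_inv X ** X) ** Y"
    by (rule matrix_mul_assoc)
  also have "\<dots> = Y"
    using \<open>invertible X\<close> by (simp add: matrix_inv_inverse)
  finally show ?thesis .
qed

lemma matrix_inv_transpose:
  fixes X :: "'a::field ^ 'n::finite ^ 'n"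
  assumes "invertible X"
  shows "matrix_inv (transpose X) = transpose (matrix_inv X)"
  using assms by (intro matrix_inv_eqI) (simp add: matrix_inv_inverse flip: matrix_transpose_mul)

lemma sqmat_unitI: "x * y = 1 \<Longrightarrow> sqmat_unit x"
  by transfer (auto simp: invertible_right_inverse)

lemma sqmat_inv_eqI: "x * y = 1 \<Longrightarrow> sqmat_inv x = y"
  by transfer (rule matrix_inv_eqI)

lemma sqmat_unit_inverse:
  assumes "sqmat_unit x"
  shows sqmat_right_inverse: "x * sqmat_inv x = 1" and sqmat_left_inverse: "sqmat_inv x * x = 1"
  using assms by (transfer; simp add: matrix_inv_inverse)+

lemma sqmat_inv_cancel:
  assumes "sqmat_unit x"
  shows "sqmat_inv x * (x * y) = y" "x * (sqmat_inv x * y) = y"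
  using assms by (simp_all add: sqmat_unit_inverse flip: mult.assoc)

lemma sqmat_inv_mult:
  assumes "sqmat_unit x" "sqmat_unit y"
  shows "sqmat_unit (x * y)" "sqmat_inv (x * y) = sqmat_inv y * sqmat_inv x"
proof -
  have "x * y * (sqmat_inv y * sqmat_inv x) = 1"
    by (metis assms mult.assoc mult_1_left sqmat_right_inverse)
  then show "sqmat_unit (x * y)" "sqmat_inv (x * y) = sqmat_inv y * sqmat_inv x"
    by (simp_all add: sqmat_unitI sqmat_inv_eqI)
qed

lemma sqmat_unit_two: "sqmat_unit (2 :: 'n::finite sqmat)"
proof -
  have "(2 :: 'n sqmat) = 1 + 1" by simp
  moreover have "sqmat_unit (1 + 1 :: 'n sqmat)"
    by transfer (auto simp: invertible_right_inverse intro!: exI[of _ "mat (1/2)"]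
        simp: vec_eq_iff matrix_matrix_mult_def mat_def if_distrib if_distribR cong: if_cong)
  ultimately show ?thesis by simp
qed

lemma two_mult_sqmat_inv_two [simp]: "2 * sqmat_inv (2 :: 'n::finite sqmat) = 1"
  and sqmat_inv_two_mult_two [simp]: "sqmat_inv 2 * (2 :: 'n::finite sqmat) = 1"
  by (simp_all add: sqmat_unit_inverse sqmat_unit_two)

lemma sqmat_inv_two_commute: "sqmat_inv 2 * x = x * sqmat_inv (2 :: 'n::finite sqmat)"
proof -
  let ?h = "sqmat_inv (2 :: 'n sqmat)"
  have "?h * x = ?h * (x * 2) * ?h" by (simp add: mult.assoc)
  also have "\<dots> = ?h * (2 * x) * ?h" by (simp add: mult_2 mult_2_right)
  also have "\<dots> = x * ?h" by (simp flip: mult.assoc)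
  finally show ?thesis .
qed

lemma sqmat_two_mult_half [simp]: "2 * x * sqmat_inv 2 = (x :: 'n::finite sqmat)"
  by (metis mult.assoc mult_2 mult_2_right mult_1_right two_mult_sqmat_inv_two)

section \<open>Cayley transforms\<close>

context
  fixes x :: "'n::finite sqmat"
  assumes unit_x: "sqmat_unit (1 + x)"
begin

lemma sqmat_inv_one_plus_commute: "sqmat_inv (1 + x) * x = x * sqmat_inv (1 + x)"
proof -
  have "sqmat_inv (1 + x) * ((1 + x) - 1) = ((1 + x) - 1) * sqmat_inv (1 + x)"
    using unit_x by (simp only: right_diff_distrib left_diff_distrib sqmat_unit_inverse) simp
  then show ?thesis by simp
qed

lemma sqmat_cayley_commute: "(1 - x) * sqmat_inv (1 + x) = sqmat_inv (1 + x) * (1 - x)"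
  by (simp add: algebra_simps sqmat_inv_one_plus_commute)

lemma one_plus_sqmat_cayley: "1 + sqmat_cayley x = 2 * sqmat_inv (1 + x)"
proof -
  have "1 + sqmat_cayley x = (1 + x) * sqmat_inv (1 + x) + (1 - x) * sqmat_inv (1 + x)"
    using unit_x by (simp add: sqmat_cayley_eq sqmat_unit_inverse)
  then show ?thesis by (simp add: algebra_simps mult_2)
qed

lemma one_minus_sqmat_cayley: "1 - sqmat_cayley x = 2 * x * sqmat_inv (1 + x)"
proof -
  have "1 - sqmat_cayley x = (1 + x) * sqmat_inv (1 + x) - (1 - x) * sqmat_inv (1 + x)"
    using unit_x by (simp add: sqmat_cayley_eq sqmat_unit_inverse)
  then show ?thesis by (simp add: algebra_simps mult_2)
qed

lemma sqmat_inv_one_plus_cayley: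
  "sqmat_unit (1 + sqmat_cayley x)" "sqmat_inv (1 + sqmat_cayley x) = (1 + x) * sqmat_inv 2"
proof -
  have "(1 + sqmat_cayley x) * ((1 + x) * sqmat_inv 2) = 1"
    using unit_x by (simp add: one_plus_sqmat_cayley mult.assoc sqmat_inv_two_commute
        flip: mult.assoc[of "sqmat_inv (1 + x)"] add: sqmat_unit_inverse)
  then show "sqmat_unit (1 + sqmat_cayley x)" "sqmat_inv (1 + sqmat_cayley x) = (1 + x) * sqmat_inv 2"
    by (simp_all add: sqmat_unitI sqmat_inv_eqI)
qed

lemma sqmat_cayley_cayley: "sqmat_cayley (sqmat_cayley x) = x"
proof -
  have "sqmat_cayley (sqmat_cayley x) = 2 * x * (sqmat_inv (1 + x) * (1 + x)) * sqmat_inv 2"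
    by (simp add: sqmat_cayley_eq[of "sqmat_cayley x"] one_minus_sqmat_cayley
        sqmat_inv_one_plus_cayley mult.assoc)
  also have "\<dots> = x"
    using unit_x by (simp add: sqmat_unit_inverse)
  finally show ?thesis .
qed

end

lemma sqmat_push_through:
  fixes a b :: "'n::finite sqmat"
  assumes unit_ab: "sqmat_unit (1 + a * b)"
  shows "sqmat_unit (1 + b * a)"
    and "sqmat_inv (1 + b * a) = 1 - b * sqmat_inv (1 + a * b) * a"
    and "b * sqmat_inv (1 + a * b) = sqmat_inv (1 + b * a) * b"
proof -
  let ?r = "sqmat_inv (1 + a * b)"
  have "(1 + b * a) * (1 - b * ?r * a) = 1 + b * a - b * ((1 + a * b) * ?r) * a"
    by (simp add: algebra_simps)
  then have inv: "(1 + b * a) * (1 - b * ?r * a) = 1"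
    using unit_ab by (simp add: sqmat_unit_inverse)
  then show "sqmat_unit (1 + b * a)" "sqmat_inv (1 + b * a) = 1 - b * ?r * a"
    by (simp_all add: sqmat_unitI sqmat_inv_eqI)
  have "b * ?r = b * (?r * (1 + a * b)) - b * ?r * a * b"
    by (simp add: algebra_simps)
  also have "\<dots> = (1 - b * ?r * a) * b"
    by (simp only: sqmat_left_inverse[OF unit_ab]) (simp add: algebra_simps)
  finally show "b * ?r = sqmat_inv (1 + b * a) * b"
    using inv by (simp add: sqmat_inv_eqI)
qed

context
  fixes a b :: "'n::finite sqmat"
  assumes unit_a: "sqmat_unit (1 + a)" and unit_b: "sqmat_unit (1 + b)"
    and unit_ab: "sqmat_unit (1 + a * b)"
begin

lemma one_plus_sqmat_cayley_mult:
  "1 + sqmat_cayley a * sqmat_cayley b = 2 * sqmat_inv (1 + a) * (1 + a * b) * sqmat_inv (1 + b)"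
proof -
  let ?p = "sqmat_inv (1 + a)" and ?q = "sqmat_inv (1 + b)"
  have "1 + sqmat_cayley a * sqmat_cayley b = ?p * (1 + a) * (1 + b) * ?q + ?p * (1 - a) * (1 - b) * ?q"
    using unit_a unit_b
    by (simp add: sqmat_cayley_eq sqmat_cayley_commute[OF unit_a] sqmat_unit_inverse mult.assoc)
  also have "\<dots> = ?p * ((1 + a) * (1 + b) + (1 - a) * (1 - b)) * ?q"
    by (simp add: algebra_simps)
  also have "\<dots> = 2 * ?p * (1 + a * b) * ?q"
    by (simp add: algebra_simps mult_2 mult_2_right)
  finally show ?thesis .
qed

lemma sqmat_inv_one_plus_cayley_mult:
  "sqmat_unit (1 + sqmat_cayley a * sqmat_cayley b)"
  "sqmat_inv (1 + sqmat_cayley a * sqmat_cayley b)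
     = (1 + b) * sqmat_inv (1 + a * b) * (1 + a) * sqmat_inv 2"
proof -
  have "(1 + sqmat_cayley a * sqmat_cayley b) * ((1 + b) * sqmat_inv (1 + a * b) * (1 + a) * sqmat_inv 2)
      = 1"
    using unit_a unit_b unit_ab
    by (simp add: one_plus_sqmat_cayley_mult mult.assoc sqmat_unit_inverse sqmat_inv_cancel)
  then show "sqmat_unit (1 + sqmat_cayley a * sqmat_cayley b)"
    "sqmat_inv (1 + sqmat_cayley a * sqmat_cayley b)
       = (1 + b) * sqmat_inv (1 + a * b) * (1 + a) * sqmat_inv 2"
    by (simp_all add: sqmat_unitI sqmat_inv_eqI)
qed

lemma one_plus_sqmat_cayley_cayley_mult:
  "1 + sqmat_cayley (sqmat_cayley a * sqmat_cayley b) = (1 + b) * sqmat_inv (1 + a * b) * (1 + a)"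
proof -
  have "1 + sqmat_cayley (sqmat_cayley a * sqmat_cayley b)
      = 2 * ((1 + b) * sqmat_inv (1 + a * b) * (1 + a)) * sqmat_inv 2"
    by (simp only: one_plus_sqmat_cayley[OF sqmat_inv_one_plus_cayley_mult(1)]
        sqmat_inv_one_plus_cayley_mult(2) mult.assoc)
  then show ?thesis by (simp only: sqmat_two_mult_half)
qed

lemma sqmat_inv_one_plus_cayley_cayley_mult:
  "sqmat_unit (1 + sqmat_cayley (sqmat_cayley a * sqmat_cayley b))"
  "sqmat_inv (1 + sqmat_cayley (sqmat_cayley a * sqmat_cayley b))
     = sqmat_inv (1 + a) * (1 + a * b) * sqmat_inv (1 + b)"
proof -
  have "(1 + sqmat_cayley (sqmat_cayley a * sqmat_cayley b))
      * (sqmat_inv (1 + a) * (1 + a * b) * sqmat_inv (1 + b)) = 1"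
    using unit_a unit_b unit_ab
    by (simp add: one_plus_sqmat_cayley_cayley_mult mult.assoc sqmat_unit_inverse sqmat_inv_cancel)
  then show "sqmat_unit (1 + sqmat_cayley (sqmat_cayley a * sqmat_cayley b))"
    "sqmat_inv (1 + sqmat_cayley (sqmat_cayley a * sqmat_cayley b))
       = sqmat_inv (1 + a) * (1 + a * b) * sqmat_inv (1 + b)"
    by (simp_all add: sqmat_unitI sqmat_inv_eqI)
qed

lemma one_plus_mult_eq_cayley_cayley_mult:
  "1 + a * b = (1 + a) * sqmat_inv (1 + sqmat_cayley (sqmat_cayley a * sqmat_cayley b)) * (1 + b)"
  using unit_a unit_b
  by (simp add: sqmat_inv_one_plus_cayley_cayley_mult mult.assoc sqmat_unit_inverse sqmat_inv_cancel)

lemma sqmat_cayley_cayley_mult_conj_one_plus_fst: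
  "sqmat_cayley (sqmat_cayley a * sqmat_cayley b)
     = sqmat_inv (1 + a) * (a + b) * sqmat_inv (1 + a * b) * (1 + a)"
proof -
  have "sqmat_inv (1 + a) * (a + b) * sqmat_inv (1 + a * b) * (1 + a)
      = sqmat_inv (1 + a) * (1 + a) * ((1 + b) * sqmat_inv (1 + a * b) * (1 + a))
        - sqmat_inv (1 + a) * ((1 + a * b) * sqmat_inv (1 + a * b)) * (1 + a)"
    by (simp add: algebra_simps)
  also have "\<dots> = (1 + b) * sqmat_inv (1 + a * b) * (1 + a) - 1"
    using unit_a unit_ab by (simp add: sqmat_unit_inverse)
  finally show ?thesis by (simp add: eq_diff_eq flip: one_plus_sqmat_cayley_cayley_mult)
qed

lemma sqmat_cayley_cayley_mult_conj_one_plus_snd: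
  "sqmat_cayley (sqmat_cayley a * sqmat_cayley b)
     = (1 + b) * sqmat_inv (1 + a * b) * (a + b) * sqmat_inv (1 + b)"
proof -
  have "(1 + b) * sqmat_inv (1 + a * b) * (a + b) * sqmat_inv (1 + b)
      = ((1 + b) * sqmat_inv (1 + a * b) * (1 + a)) * ((1 + b) * sqmat_inv (1 + b))
        - (1 + b) * (sqmat_inv (1 + a * b) * (1 + a * b)) * sqmat_inv (1 + b)"
    by (simp add: algebra_simps)
  also have "\<dots> = (1 + b) * sqmat_inv (1 + a * b) * (1 + a) - 1"
    using unit_b unit_ab by (simp add: sqmat_unit_inverse)
  finally show ?thesis by (simp add: eq_diff_eq flip: one_plus_sqmat_cayley_cayley_mult)
qed

lemma sqmat_cayley_cayley_mult_eq_one_minus: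
  "sqmat_cayley (sqmat_cayley a * sqmat_cayley b) = 1 - (1 - a) * sqmat_inv (1 + b * a) * (1 - b)"
proof -
  let ?r = "sqmat_inv (1 + a * b)" and ?r' = "sqmat_inv (1 + b * a)"
  note push = sqmat_push_through[OF unit_ab]
  have ra: "?r * a = a * ?r'"
    using sqmat_push_through(3)[OF push(1)] by simp
  have abr: "a * (b * ?r) = 1 - ?r"
    using sqmat_right_inverse[OF unit_ab] by (simp add: algebra_simps)
  have "(1 - a) * ?r' * (1 - b) = ?r' - a * ?r' - ?r' * b + a * (?r' * b)"
    by (simp add: algebra_simps)
  also have "\<dots> = ?r' - ?r * a - b * ?r + a * (b * ?r)"
    by (simp only: ra push(3))
  also have "\<dots> = 2 - (1 + b) * ?r * (1 + a)"
    by (simp only: abr push(2)) (simp add: algebra_simps)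
  finally show ?thesis
    by (simp flip: one_plus_sqmat_cayley_cayley_mult)
qed

context
  assumes unit_one_minus_a: "sqmat_unit (1 - a)" and unit_one_minus_b: "sqmat_unit (1 - b)"
begin

lemma sqmat_cayley_cayley_mult_conj_one_minus_fst:
  "sqmat_cayley (sqmat_cayley a * sqmat_cayley b)
     = (1 - a) * sqmat_inv (1 + b * a) * (a + b) * sqmat_inv (1 - a)"
proof -
  let ?r' = "sqmat_inv (1 + b * a)"
  have "(1 - a) * ?r' * (a + b) = (1 - a) * (?r' * (1 + b * a)) - (1 - a) * ?r' * (1 - b) * (1 - a)"
    by (simp add: algebra_simps)
  also have "\<dots> = sqmat_cayley (sqmat_cayley a * sqmat_cayley b) * (1 - a)"
    by (simp only: sqmat_left_inverse[OF sqmat_push_through(1)[OF unit_ab]])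
      (simp add: sqmat_cayley_cayley_mult_eq_one_minus algebra_simps)
  finally show ?thesis
    using unit_one_minus_a by (simp add: mult.assoc sqmat_unit_inverse)
qed

lemma sqmat_cayley_cayley_mult_conj_one_minus_snd:
  "sqmat_cayley (sqmat_cayley a * sqmat_cayley b)
     = sqmat_inv (1 - b) * (a + b) * sqmat_inv (1 + b * a) * (1 - b)"
proof -
  let ?r' = "sqmat_inv (1 + b * a)"
  have "(a + b) * ?r' * (1 - b) = ((1 + b * a) * ?r') * (1 - b) - (1 - b) * (1 - a) * ?r' * (1 - b)"
    by (simp add: algebra_simps)
  also have "\<dots> = (1 - b) * sqmat_cayley (sqmat_cayley a * sqmat_cayley b)"
    by (simp only: sqmat_right_inverse[OF sqmat_push_through(1)[OF unit_ab]])
      (simp add: sqmat_cayley_cayley_mult_eq_one_minus algebra_simps)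
  finally show ?thesis
    using unit_one_minus_b by (simp add: mult.assoc sqmat_inv_cancel)
qed

end

end

lift_definition sqmat_transpose :: "'n::finite sqmat \<Rightarrow> 'n sqmat" is transpose .

lemma sqmat_transpose_mult: "sqmat_transpose (x * y) = sqmat_transpose y * sqmat_transpose x"
  by transfer (rule matrix_transpose_mul)

lemma sqmat_transpose_diff: "sqmat_transpose (x - y) = sqmat_transpose x - sqmat_transpose y"
  by transfer (simp add: vec_eq_iff transpose_def)

lemma sqmat_transpose_uminus: "sqmat_transpose (- x) = - sqmat_transpose x"
  by transfer (simp add: vec_eq_iff transpose_def)

lemma sqmat_transpose_one [simp]: "sqmat_transpose 1 = 1"
  by transfer simp

lemma sqmat_unit_transpose_iff: "sqmat_unit (sqmat_transpose x) \<longleftrightarrow> sqmat_unit x"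
  by transfer (simp add: invertible_det_nz)

lemma sqmat_unit_one_minus_of_symmetric:
  assumes t_skew: "sqmat_transpose t = - t" and t_inv: "t * t = 1"
    and x_sym: "sqmat_transpose x = x" and unit_x: "sqmat_unit (1 + x * t)"
  shows "sqmat_unit (1 - x * t)"
proof -
  have "sqmat_transpose (1 - x * t) = t * (1 + x * t) * t"
    using t_inv by (simp add: sqmat_transpose_diff sqmat_transpose_mult t_skew x_sym algebra_simps)
  moreover have "sqmat_unit t"
    using t_inv by (rule sqmat_unitI)
  ultimately have "sqmat_unit (sqmat_transpose (1 - x * t))"
    using unit_x by (simp add: sqmat_inv_mult)
  then show ?thesis by (simp add: sqmat_unit_transpose_iff)
qed

lemma sum_UNIV_Plus:
  "sum f (UNIV :: ('a::finite + 'b::finite) set) = (\<Sum>x\<in>UNIV. f (Inl x)) + (\<Sum>x\<in>UNIV. f (Inr x))"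
  by (subst UNIV_Plus_UNIV[symmetric], subst sum.Plus) (auto simp: o_def)

lemma theta_mult_theta: "theta ** theta = mat 1"
proof -
  have "(theta ** theta) $ i $ j = mat 1 $ i $ j" for i j
    by (cases i; cases j) (simp_all add: matrix_matrix_mult_def sum_UNIV_Plus theta_def mat_def
        if_distrib if_distribR cong: if_cong)
  then show ?thesis unfolding vec_eq_iff by blast
qed

lemma transpose_theta: "transpose theta = - theta"
  unfolding theta_def by (auto simp: vec_eq_iff transpose_def split: sum.split)

lift_definition sqmat_theta :: "('d::finite + 'd) sqmat" is theta .

lemma sqmat_theta_mult_theta: "sqmat_theta * sqmat_theta = 1"
  by transfer (rule theta_mult_theta)

lemma sqmat_transpose_theta: "sqmat_transpose sqmat_theta = - sqmat_theta"
  by transfer (rule transpose_theta)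

section \<open>Block matrices and the composition \<open>#\<close>\<close>

definition sqmat_blocks ::
    "'n::finite sqmat \<Rightarrow> 'n sqmat \<Rightarrow> 'n sqmat \<Rightarrow> 'n sqmat \<Rightarrow> complex ^ ('n + 'n) ^ ('n + 'n)" where
  "sqmat_blocks P Q R S = (\<chi> i j. case (i, j) of
      (Inl k, Inl l) \<Rightarrow> Rep_sqmat P $ k $ l
    | (Inl k, Inr l) \<Rightarrow> Rep_sqmat Q $ k $ l
    | (Inr k, Inl l) \<Rightarrow> Rep_sqmat R $ k $ l
    | (Inr k, Inr l) \<Rightarrow> Rep_sqmat S $ k $ l)"

lemmas sqmat_rep_eqs = times_sqmat.rep_eq plus_sqmat.rep_eq minus_sqmat.rep_eq uminus_sqmat.rep_eq
  one_sqmat.rep_eq zero_sqmat.rep_eq sqmat_transpose.rep_eq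

lemma sqmat_blocks_mult:
  "sqmat_blocks P Q R S ** sqmat_blocks P' Q' R' S'
     = sqmat_blocks (P * P' + Q * R') (P * Q' + Q * S') (R * P' + S * R') (R * Q' + S * S')"
  unfolding sqmat_blocks_def
  by (auto simp: vec_eq_iff matrix_matrix_mult_def sum_UNIV_Plus sqmat_rep_eqs split: sum.split)

lemma sqmat_blocks_one: "sqmat_blocks 1 0 0 1 = mat 1"
  unfolding sqmat_blocks_def by (auto simp: vec_eq_iff mat_def sqmat_rep_eqs split: sum.split)

lemma transpose_sqmat_blocks:
  "transpose (sqmat_blocks P Q R S)
     = sqmat_blocks (sqmat_transpose P) (sqmat_transpose R) (sqmat_transpose Q) (sqmat_transpose S)"
  unfolding sqmat_blocks_def by (auto simp: vec_eq_iff transpose_def sqmat_rep_eqs split: sum.split)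

definition sqmat_stack :: "'n::finite sqmat \<Rightarrow> 'n sqmat \<Rightarrow> complex ^ 'n ^ ('n + 'n)" where
  "sqmat_stack U V = (\<chi> i j. case i of Inl k \<Rightarrow> Rep_sqmat U $ k $ j | Inr k \<Rightarrow> Rep_sqmat V $ k $ j)"

lemma sqmat_blocks_mult_Jmat:
  fixes P Q R S :: "('d::finite + 'd) sqmat"
  shows "sqmat_blocks P Q R S ** Jmat = sqmat_stack (Q - P) (S - R)"
proof -
  have "(sqmat_blocks P Q R S ** Jmat) $ i $ j = sqmat_stack (Q - P) (S - R) $ i $ j" for i j
    by (cases i) (simp_all add: matrix_matrix_mult_def sum_UNIV_Plus[where 'a="'d + 'd" and 'b="'d + 'd"]
        sqmat_blocks_def Jmat_def
        sqmat_stack_def sqmat_rep_eqs mat_def if_distrib if_distribR cong: if_cong)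
  then show ?thesis unfolding vec_eq_iff by blast
qed

lemma transpose_Jmat_mult_sqmat_stack:
  fixes U V :: "('d::finite + 'd) sqmat"
  shows "transpose Jmat ** sqmat_stack U V = Rep_sqmat (V - U)"
proof -
  have "(transpose Jmat ** sqmat_stack U V) $ i $ j = Rep_sqmat (V - U) $ i $ j" for i j
    by (simp add: matrix_matrix_mult_def sum_UNIV_Plus[where 'a="'d + 'd" and 'b="'d + 'd"]
        transpose_def Jmat_def sqmat_stack_def
        sqmat_rep_eqs mat_def if_distrib if_distribR cong: if_cong)
  then show ?thesis unfolding vec_eq_iff by blast
qed

lemma Jmat_sqmat_blocks_Jmat:
  "transpose Jmat ** sqmat_blocks P Q R S ** Jmat = Rep_sqmat (P - Q - R + S)"
  by (simp add: sqmat_blocks_mult_Jmat transpose_Jmat_mult_sqmat_stack algebra_simps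
      flip: matrix_mul_assoc)

lemma Mmat_eq_sqmat_blocks:
  "Mmat (Rep_sqmat x) (Rep_sqmat y) = sqmat_blocks (sqmat_theta * x * sqmat_theta) (- sqmat_theta)
     sqmat_theta (sqmat_theta * y * sqmat_theta)"
  unfolding sqmat_blocks_def Mmat_def
  by (auto simp: vec_eq_iff sqmat_rep_eqs sqmat_theta.rep_eq split: sum.split)

lemma invertible_Mmat_and_sharp_eq:
  fixes A B :: "complex ^ ('d::finite + 'd) ^ ('d + 'd)"
  assumes unit: "invertible (mat 1 + B ** theta ** (A ** theta))"
  shows "invertible (Mmat A B)"
    and "A #\<^sub>s B = (mat 1 - (mat 1 - A ** theta) ** matrix_inv (mat 1 + B ** theta ** (A ** theta))
                        ** (mat 1 - B ** theta)) ** theta" (is "_ = ?rhs")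
proof -
  obtain x y where A: "A = Rep_sqmat x" and B: "B = Rep_sqmat y"
    by (metis Abs_sqmat_inverse UNIV_I)
  define t where "t = (sqmat_theta :: ('d + 'd) sqmat)"
  define a b where "a = x * t" and "b = y * t"
  define r where "r = sqmat_inv (1 + b * a)"
  have rep: "Rep_sqmat t = theta" "Rep_sqmat a = A ** theta" "Rep_sqmat b = B ** theta"
    by (simp_all add: t_def a_def b_def A B sqmat_rep_eqs sqmat_theta.rep_eq)
  have tt: "t * t = 1" by (simp add: t_def sqmat_theta_mult_theta)
  have "sqmat_unit (1 + b * a)"
    using unit by (simp add: sqmat_unit.rep_eq sqmat_rep_eqs rep)
  then have r_inv: "(1 + b * a) * r = 1" by (simp add: r_def sqmat_unit_inverse)
  define W where "W = sqmat_blocks (r * b * t) (r * t) ((a * r * b - 1) * t) (a * r * t)"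
  have "t * x * t * (r * b * t) + - t * ((a * r * b - 1) * t) = t * t"
    by (simp add: a_def algebra_simps)
  moreover have "t * x * t * (r * t) + - t * (a * r * t) = 0"
    by (simp add: a_def algebra_simps)
  moreover have "t * (r * b * t) + t * y * t * ((a * r * b - 1) * t) = t * ((1 + b * a) * r * b - b) * t"
    by (simp add: b_def algebra_simps)
  moreover have "t * (r * t) + t * y * t * (a * r * t) = t * ((1 + b * a) * r) * t"
    by (simp add: b_def algebra_simps)
  ultimately have "Mmat A B ** W = mat 1"
    by (simp add: A B W_def Mmat_eq_sqmat_blocks sqmat_blocks_mult r_inv tt
        flip: t_def sqmat_blocks_one)
  then show "invertible (Mmat A B)"
    by (auto simp: invertible_right_inverse)
  have "A #\<^sub>s B = transpose Jmat ** W ** Jmat"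
    by (simp add: sharp_def matrix_inv_eqI[OF \<open>Mmat A B ** W = mat 1\<close>])
  also have "\<dots> = Rep_sqmat ((1 - (1 - a) * r * (1 - b)) * t)"
    by (simp add: W_def Jmat_sqmat_blocks_Jmat Rep_sqmat_inject algebra_simps)
  also have "\<dots> = ?rhs"
    by (simp add: sqmat_rep_eqs sqmat_inv.rep_eq rep r_def)
  finally show "A #\<^sub>s B = ?rhs" .
qed

lemma Sym_Mmat:
  assumes "Sym A" "Sym B"
  shows "Sym (Mmat A B)"
proof -
  obtain x y where A: "A = Rep_sqmat x" and B: "B = Rep_sqmat y"
    by (metis Abs_sqmat_inverse UNIV_I)
  have "sqmat_transpose x = x" "sqmat_transpose y = y"
    using assms by (simp_all add: Sym_def A B sqmat_transpose.rep_eq Rep_sqmat_inject[symmetric])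
  then show ?thesis
    by (simp add: Sym_def A B Mmat_eq_sqmat_blocks transpose_sqmat_blocks sqmat_transpose_mult
        sqmat_transpose_uminus sqmat_transpose_theta mult.assoc)
qed

lemma Sym_sharp:
  assumes "Sym A" "Sym B" "invertible (Mmat A B)"
  shows "Sym (A #\<^sub>s B)"
  using assms Sym_Mmat[OF assms(1,2)]
  by (simp add: Sym_def sharp_def matrix_transpose_mul matrix_mul_assoc
      flip: matrix_inv_transpose)

lemma invertible_one_minus_theta:
  assumes "Sym A" "invertible (mat 1 + A ** theta)"
  shows "invertible (mat 1 - A ** theta)"
  using sqmat_unit_one_minus_of_symmetric[untransferred, OF transpose_theta theta_mult_theta] assms
  by (simp add: Sym_def)

lemma sharp_eq_cayley:
  fixes A B :: "complex ^ ('d::finite + 'd) ^ ('d + 'd)"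
  assumes "invertible (mat 1 + A ** theta)" "invertible (mat 1 + B ** theta)"
    and "invertible (mat 1 + A ** theta ** (B ** theta))"
  shows "invertible (Mmat A B)"
    and "A #\<^sub>s B = cayley (cayley (A ** theta) ** cayley (B ** theta)) ** theta"
  using invertible_Mmat_and_sharp_eq[OF sqmat_push_through(1)[untransferred, OF assms(3)]]
    sqmat_cayley_cayley_mult_eq_one_minus[untransferred, OF assms]
  by simp_all

theorem mainTheorem3:
  fixes A B :: "complex ^ ('d::finite + 'd) ^ ('d + 'd)"
  assumes hA: "Sym_qnd A" and hB: "Sym_qnd B"
    and hAB: "invertible (mat 1 + A ** theta ** B ** theta)"
  shows "invertible (Mmat A B)
    \<and> invertible (mat 1 + A ** theta) \<and> invertible (mat 1 + B ** theta)
    \<and> invertible (mat 1 - A ** theta) \<and> invertible (mat 1 - B ** theta)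
    \<and> invertible (mat 1 + B ** theta ** A ** theta)
    \<and> invertible (mat 1 + cayley (A ** theta) ** cayley (B ** theta))
    \<and> invertible (mat 1 + (A #\<^sub>s B) ** theta)
    \<and> A #\<^sub>s B = cayley (cayley (A ** theta) ** cayley (B ** theta)) ** theta
    \<and> A #\<^sub>s B = matrix_inv (mat 1 + A ** theta) ** (A ** theta + B ** theta)
                 ** matrix_inv (mat 1 + A ** theta ** B ** theta) ** (mat 1 + A ** theta) ** theta
    \<and> A #\<^sub>s B = (mat 1 + B ** theta) ** matrix_inv (mat 1 + A ** theta ** B ** theta)
                 ** (A ** theta + B ** theta) ** matrix_inv (mat 1 + B ** theta) ** theta
    \<and> A #\<^sub>s B = (mat 1 - A ** theta) ** matrix_inv (mat 1 + B ** theta ** A ** theta)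
                 ** (A ** theta + B ** theta) ** matrix_inv (mat 1 - A ** theta) ** theta
    \<and> A #\<^sub>s B = matrix_inv (mat 1 - B ** theta) ** (A ** theta + B ** theta)
                 ** matrix_inv (mat 1 + B ** theta ** A ** theta) ** (mat 1 - B ** theta) ** theta
    \<and> cayley ((A #\<^sub>s B) ** theta) = cayley (A ** theta) ** cayley (B ** theta)
    \<and> mat 1 + A ** theta ** B ** theta
        = (mat 1 + A ** theta) ** matrix_inv (mat 1 + (A #\<^sub>s B) ** theta) ** (mat 1 + B ** theta)
    \<and> Sym_qnd (A #\<^sub>s B)"
proof -
  let ?a = "A ** theta" and ?b = "B ** theta"
  have sym: "Sym A" "Sym B" and units: "invertible (mat 1 + ?a)" "invertible (mat 1 + ?b)"
    using hA hB by (simp_all add: Sym_qnd_def invertible_det_nz)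
  have assoc: "A ** theta ** B ** theta = ?a ** ?b" "B ** theta ** A ** theta = ?b ** ?a"
    by (simp_all add: matrix_mul_assoc)
  have unit_ab: "invertible (mat 1 + ?a ** ?b)"
    using hAB by (simp add: assoc)
  have units_minus: "invertible (mat 1 - ?a)" "invertible (mat 1 - ?b)"
    using sym units by (simp_all add: invertible_one_minus_theta)
  note sharp = sharp_eq_cayley[OF units unit_ab]
  have sharp_theta: "A #\<^sub>s B ** theta = cayley (cayley ?a ** cayley ?b)"
    by (simp add: sharp theta_mult_theta flip: matrix_mul_assoc)
  note unit_cayley_mult = sqmat_inv_one_plus_cayley_mult(1)[untransferred, OF units unit_ab]
  note unit_sharp = sqmat_inv_one_plus_cayley_cayley_mult(1)[untransferred, OF units unit_ab]
  have "Sym_qnd (A #\<^sub>s B)"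
    using Sym_sharp[OF sym sharp(1)] unit_sharp by (simp add: Sym_qnd_def sharp_theta invertible_det_nz)
  then show ?thesis
    unfolding sharp_theta unfolding sharp(2) assoc
    using sharp(1) units units_minus unit_cayley_mult unit_sharp
      sqmat_push_through(1)[untransferred, OF unit_ab]
      sqmat_cayley_cayley_mult_conj_one_plus_fst[untransferred, OF units unit_ab]
      sqmat_cayley_cayley_mult_conj_one_plus_snd[untransferred, OF units unit_ab]
      sqmat_cayley_cayley_mult_conj_one_minus_fst[untransferred, OF units unit_ab units_minus]
      sqmat_cayley_cayley_mult_conj_one_minus_snd[untransferred, OF units unit_ab units_minus]
      sqmat_cayley_cayley[untransferred, OF unit_cayley_mult]
      one_plus_mult_eq_cayley_cayley_mult[untransferred, OF units unit_ab]
    by - (intro conjI refl; (assumption | (rule arg_cong[where f="\<lambda>M. M ** theta"], assumption)))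
qed

end
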